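(* Let $\mathbf L\in\mathbb R_+^{n\times k}$ and $\boldsymbol\psi:\mathcal C\to\mathbb R_+^n$. Suppose there exist $r\in\mathbb Z_+$ and points $\mathbf z_1,\dots,\mathbf z_r\in\mathcal S_\psi$ such that $\bigcup_{j=1}^r\mathcal N^\psi(\mathbf z_j)=\Delta_n$ and, for each $j\in[r]$, there exists $t\in[k]$ with $\mathcal N^\psi(\mathbf z_j)\subseteq\mathcal Q^{\mathbf L}_t$. Then $\boldsymbol\psi$ is $\mathbf L$-calibrated.
   Context: Notation: $[m]=\{1,\dots,m\}$; $\Delta_n=\{\mathbf p\in\mathbb R_+^n:\sum_i p_i=1\}$. A loss matrix $\mathbf L\in\mathbb R_+^{n\times k}$ has columns $\boldsymbol\ell_t$, $t\in[k]$. A surrogate loss is $\boldsymbol\psi:\mathcal C\to\mathbb R_+^n$ with $\mathcal C\subseteq\mathbb R^d$ convex; $\mathcal R_\psi=\boldsymbol\psi(\mathcal C)$, $\mathcal S_\psi=\operatorname{conv}(\mathcal R_\psi)$. $\boldsymbol\psi$ is $\mathbf L$-calibrated if there is $\mathrm{pred}:\mathcal C\to[k]$ such that for all $\mathbf p\in\Delta_n$: $\inf_{\mathbf u\in\mathcal C:\mathrm{pred}(\mathbf u)\notin\operatorname{argmin}_t\mathbf p^\top\boldsymbol\ell_t}\mathbf p^\top\boldsymbol\psi(\mathbf u)>\inf_{\mathbf u\in\mathcal C}\mathbf p^\top\boldsymbol\psi(\mathbf u)$. Trigger probability set: $\mathcal Q^{\mathbf L}_t=\{\mathbf p\in\Delta_n: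 t\in\operatorname{argmin}_{t'\in[k]}\mathbf p^\top\boldsymbol\ell_{t'}\}$. Positive normal set at $\mathbf z\in\mathcal S_\psi$: $\mathcal N^\psi(\mathbf z)=\{\mathbf p\in\Delta_n:\mathbf p^\top\mathbf z=\inf_{\mathbf z'\in\mathcal S_\psi}\mathbf p^\top\mathbf z'\}$. *)

theory Defs
  imports "HOL-Analysis.Analysis"
begin

definition prob_simplex :: "(real ^ 'n) set" where
  "prob_simplex = {p. (\<forall>i. 0 \<le> p $ i) \<and> (\<Sum>i\<in>UNIV. p $ i) = 1}"

text \<open>argmin over t of p . l_t, for a loss matrix given by its columns L t.\<close>
definition argmin_loss :: "('k \<Rightarrow> real ^ 'n) \<Rightarrow> real ^ 'n \<Rightarrow> 'k set" where
  "argmin_loss L p = {t. \<forall>t'. p \<bullet> L t \<le> p \<bullet> L t'}"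

text \<open>Calibration; infima are taken in the extended reals (inf of the empty set is +infinity).\<close>
definition calibrated ::
  "('k \<Rightarrow> real ^ 'n) \<Rightarrow> ('d \<Rightarrow> real ^ 'n) \<Rightarrow> 'd set \<Rightarrow> bool" where
  "calibrated L psi C \<longleftrightarrow>
     (\<exists>pred :: 'd \<Rightarrow> 'k. \<forall>p\<in>prob_simplex.
        (INF u\<in>{u\<in>C. pred u \<notin> argmin_loss L p}. ereal (p \<bullet> psi u))
          > (INF u\<in>C. ereal (p \<bullet> psi u)))"

definition trigger_set :: "('k \<Rightarrow> real ^ 'n) \<Rightarrow> 'k \<Rightarrow> (real ^ 'n) set" where
  "trigger_set L t = {p\<in>prob_simplex. t \<in> argmin_loss L p}"

definition S_psi :: "('d \<Rightarrow> real ^ 'n) \<Rightarrow> 'd set \<Rightarrow> (real ^ 'n) set" where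
  "S_psi psi C = convex hull (psi ` C)"

definition normal_set :: "('d \<Rightarrow> real ^ 'n) \<Rightarrow> 'd set \<Rightarrow> real ^ 'n \<Rightarrow> (real ^ 'n) set" where
  "normal_set psi C z = {p\<in>prob_simplex. p \<bullet> z = Inf ((\<lambda>z'. p \<bullet> z') ` S_psi psi C)}"

end

theory Submission
  imports Defs
begin

(*
  Let V = {z_1, ..., z_r}.  The cover hypothesis says that every probability
  vector q is minimised over S_psi at some point of V, so for every u in C no
  linear functional q in the simplex can separate psi u strictly below V.  A
  separating-hyperplane argument against the "upper set" conv V + R^n_+ turns
  this into a point of conv V lying componentwise below psi u; in the convex
  combination some vertex v carries weight at least 1/|V|.  Predicting with the
  trigger label of that heavy vertex is calibrated: if the label is wrong for p,
  then p is not in the normal set at v, so p.v exceeds the optimum m = min_S p.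
  by a gap delta > 0 that is uniform over the finite set V, and hence
  p.psi u >= m + delta/|V|, while the infimum of p.psi over C is at most m.
*)

lemma inner_mono_nonneg:
  fixes p c w :: "real^'n"
  assumes "\<forall>i. 0 \<le> p$i" and "\<forall>i. c$i \<le> w$i"
  shows "p \<bullet> c \<le> p \<bullet> w"
  unfolding inner_vec_def using assms by (auto intro!: sum_mono mult_left_mono)

lemma normalized_in_prob_simplex:
  fixes a :: "real^'n::finite"
  assumes nonneg: "\<forall>i. 0 \<le> a$i" and nonzero: "a \<noteq> 0"
  shows "(\<Sum>i\<in>UNIV. a$i) > 0" and "(1 / (\<Sum>i\<in>UNIV. a$i)) *\<^sub>R a \<in> prob_simplex"
proof -
  have "(\<Sum>i\<in>UNIV. a$i) \<noteq> 0"
  proof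
    assume "(\<Sum>i\<in>UNIV. a$i) = 0"
    then have "\<forall>i. a$i = 0" using nonneg by (simp add: sum_nonneg_eq_0_iff)
    then show False using nonzero by (simp add: vec_eq_iff)
  qed
  then show pos: "(\<Sum>i\<in>UNIV. a$i) > 0" using nonneg by (simp add: sum_nonneg order_le_neq_trans)
  then show "(1 / (\<Sum>i\<in>UNIV. a$i)) *\<^sub>R a \<in> prob_simplex"
    unfolding prob_simplex_def using nonneg by (simp add: sum_divide_distrib[symmetric])
qed

lemma lower_bound_convex_hull:
  fixes q :: "'a::real_inner"
  assumes "\<forall>a\<in>A. M \<le> q \<bullet> a" and "x \<in> convex hull A"
  shows "M \<le> q \<bullet> x"
proof -
  have "convex hull A \<subseteq> {x. M \<le> q \<bullet> x}"
    using assms(1) by (intro hull_minimal) (auto intro: convex_halfspace_ge[of M q, simplified])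
  then show ?thesis using assms(2) by auto
qed

lemma INF_le_convex_hull:
  fixes p :: "'a::real_inner" and g :: "'d \<Rightarrow> 'a"
  assumes x: "x \<in> convex hull (g ` C)"
  shows "(INF u\<in>C. ereal (p \<bullet> g u)) \<le> ereal (p \<bullet> x)"
proof (rule ccontr)
  assume "\<not> ?thesis"
  then have "\<forall>u\<in>C. ereal (p \<bullet> x) < ereal (p \<bullet> g u)"
    using INF_lower[of _ C "\<lambda>u. ereal (p \<bullet> g u)"] by (meson not_le order_less_le_trans)
  then have "convex hull (g ` C) \<subseteq> {y. p \<bullet> x < p \<bullet> y}"
    by (intro hull_minimal) (auto intro: convex_halfspace_gt)
  then show False using x by auto
qed

lemma heavy_weight_exists:
  assumes "finite V" and "V \<noteq> {}" and "sum \<mu> V = 1"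
  shows "\<exists>v\<in>V. 1 / card V \<le> \<mu> v"
proof (rule ccontr)
  assume "\<not> ?thesis"
  then have "sum \<mu> V < (\<Sum>v\<in>V. 1 / card V)"
    using assms(1,2) by (intro sum_strict_mono) auto
  also have "\<dots> = 1" using assms(1,2) by simp
  finally show False using assms(3) by simp
qed

lemma uniform_gap:
  fixes X :: "real set"
  assumes "finite X" and "\<forall>x\<in>X. m \<le> x"
  shows "\<exists>\<delta>>0. \<forall>x\<in>X. x = m \<or> m + \<delta> \<le> x"
proof -
  define B where "B = {x\<in>X. x \<noteq> m}"
  have "finite B" using assms(1) unfolding B_def by simp
  show ?thesis
  proof (cases "B = {}")
    case True
    then show ?thesis unfolding B_def by (intro exI[of _ 1]) auto
  next
    case False
    have "Min B - m > 0" using \<open>finite B\<close> False assms(2) unfolding B_def by (auto simp: Min_gr_iff)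
    moreover have "\<forall>x\<in>X. x = m \<or> m + (Min B - m) \<le> x"
      using \<open>finite B\<close> Min_le[of B] unfolding B_def by fastforce
    ultimately show ?thesis by blast
  qed
qed

text \<open>If no point of a compact convex set K lies componentwise below w, then K is
  strictly separated from w by a nonnegative functional: separate w from the
  closed convex upper set K + R^n_+; the recession directions force nonnegativity.\<close>
lemma nonneg_separation:
  fixes K :: "(real^'n::finite) set" and w :: "real^'n"
  assumes K: "compact K" "convex K" "K \<noteq> {}"
    and not_below: "\<not> (\<exists>c\<in>K. \<forall>i. c$i \<le> w$i)"
  shows "\<exists>a. (\<forall>i. 0 \<le> a$i) \<and> (\<forall>c\<in>K. a \<bullet> w < a \<bullet> c)"
proof -
  define Pos where "Pos = {y::real^'n. \<forall>i. 0 \<le> y$i}"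
  define Z where "Z = (\<Union>x\<in>Pos. \<Union>c\<in>K. {x + c})"
  have "closed Z" unfolding Z_def Pos_def
    by (rule closed_compact_sums[OF closed_positive_orthant K(1)])
  moreover have "convex Z" unfolding Z_def Pos_def
    by (rule convex_sums[OF convex_box_cart K(2)]) (simp add: convex_real_interval(1)[unfolded atLeast_def])
  moreover have "w \<notin> Z"
    using not_below unfolding Z_def Pos_def by force
  ultimately obtain a b where ab: "a \<bullet> w < b" "\<forall>x\<in>Z. a \<bullet> x > b"
    using separating_hyperplane_closed_point by blast
  obtain c0 where c0: "c0 \<in> K" using K(3) by blast
  have "0 \<le> a$i" for i
  proof (rule ccontr)
    assume "\<not> 0 \<le> a$i"
    then have ai: "a$i < 0" by simp
    define t where "t = (\<bar>a \<bullet> c0\<bar> + \<bar>b\<bar> + 1) / (- a$i)"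
    have "t \<ge> 0" unfolding t_def using ai by (intro divide_nonneg_nonneg) auto
    then have "axis i t \<in> Pos" unfolding Pos_def by (simp add: axis_def)
    then have "axis i t + c0 \<in> Z" using c0 unfolding Z_def by auto
    then have "a \<bullet> (axis i t + c0) > b" using ab by auto
    moreover have "a \<bullet> axis i t = -(\<bar>a \<bullet> c0\<bar> + \<bar>b\<bar> + 1)"
      unfolding t_def using ai by (simp add: inner_axis)
    ultimately show False by (simp add: inner_add_right)
  qed
  moreover have "a \<bullet> w < a \<bullet> c" if "c \<in> K" for c
  proof -
    have "0 \<in> Pos" unfolding Pos_def by simp
    then have "0 + c \<in> Z" using that unfolding Z_def by blast
    then have "b < a \<bullet> c" using ab(2) by simp
    then show ?thesis using ab(1) by simp
  qed
  ultimately show ?thesis by blast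
qed

lemma dominated_point_exists:
  fixes K :: "(real^'n::finite) set" and w :: "real^'n"
  assumes K: "compact K" "convex K" "K \<noteq> {}"
    and no_separation: "\<forall>q\<in>prob_simplex. \<exists>c\<in>K. q \<bullet> c \<le> q \<bullet> w"
  shows "\<exists>c\<in>K. \<forall>i. c$i \<le> w$i"
proof (rule ccontr)
  assume "\<not> ?thesis"
  then obtain a where a_nonneg: "\<forall>i. 0 \<le> a$i" and sep: "\<forall>c\<in>K. a \<bullet> w < a \<bullet> c"
    using nonneg_separation[OF K] by blast
  have "a \<noteq> 0" using sep K(3) by auto
  define s where "s = (\<Sum>i\<in>UNIV. a$i)"
  have "s > 0" and "(1 / s) *\<^sub>R a \<in> prob_simplex"
    using normalized_in_prob_simplex[OF a_nonneg \<open>a \<noteq> 0\<close>] unfolding s_def by auto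
  then obtain c where "c \<in> K" "a \<bullet> c \<le> a \<bullet> w"
    using no_separation by (fastforce simp: divide_le_cancel)
  then show False using sep by fastforce
qed

definition heavy_dominator :: "(real^'n) set \<Rightarrow> real^'n \<Rightarrow> real^'n \<Rightarrow> bool" where
  "heavy_dominator V y v \<longleftrightarrow> v \<in> V \<and>
     (\<exists>\<mu>. (\<forall>x\<in>V. 0 \<le> \<mu> x) \<and> sum \<mu> V = 1 \<and>
          (\<forall>i. (\<Sum>x\<in>V. \<mu> x *\<^sub>R x) $ i \<le> y $ i) \<and> 1 / card V \<le> \<mu> v)"

lemma heavy_dominator_exists:
  fixes V :: "(real^'n::finite) set"
  assumes fin: "finite V" and ne: "V \<noteq> {}"
    and no_separation: "\<forall>q\<in>prob_simplex. \<exists>v\<in>V. q \<bullet> v \<le> q \<bullet> y"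
  shows "\<exists>v. heavy_dominator V y v"
proof -
  have "\<forall>q\<in>prob_simplex. \<exists>c\<in>convex hull V. q \<bullet> c \<le> q \<bullet> y"
    using no_separation hull_subset[of V convex] by blast
  moreover have "compact (convex hull V)" "convex hull V \<noteq> {}"
    using fin ne by (auto simp: compact_convex_hull finite_imp_compact)
  ultimately obtain c where c: "c \<in> convex hull V" "\<forall>i. c$i \<le> y$i"
    using dominated_point_exists[of "convex hull V"] by blast
  then obtain \<mu> where \<mu>: "\<forall>x\<in>V. 0 \<le> \<mu> x" "sum \<mu> V = 1" "(\<Sum>x\<in>V. \<mu> x *\<^sub>R x) = c"
    unfolding convex_hull_finite[OF fin] by blast
  obtain v where "v \<in> V" "1 / card V \<le> \<mu> v" using heavy_weight_exists[OF fin ne \<mu>(2)] by blast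
  then show ?thesis unfolding heavy_dominator_def using \<mu> c by blast
qed

lemma heavy_dominator_gap:
  fixes p :: "real^'n"
  assumes hd: "heavy_dominator V y v" and fin: "finite V"
    and p_nonneg: "\<forall>i. 0 \<le> p$i" and m_le: "\<forall>x\<in>V. m \<le> p \<bullet> x"
    and \<delta>: "0 \<le> \<delta>" "m + \<delta> \<le> p \<bullet> v"
  shows "m + \<delta> / card V \<le> p \<bullet> y"
proof -
  obtain \<mu> where \<mu>: "\<forall>x\<in>V. 0 \<le> \<mu> x" "sum \<mu> V = 1"
      "\<forall>i. (\<Sum>x\<in>V. \<mu> x *\<^sub>R x) $ i \<le> y $ i" "1 / card V \<le> \<mu> v"
    and v: "v \<in> V" using hd unfolding heavy_dominator_def by blast
  have "m + \<delta> / card V = m + (1 / card V) * \<delta>" by simp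
  also have "\<dots> \<le> m + \<mu> v * (p \<bullet> v - m)"
    using \<mu>(1,4) v \<delta> by (intro add_left_mono mult_mono) auto
  also have "\<dots> \<le> m + (\<Sum>x\<in>V. \<mu> x * (p \<bullet> x - m))"
    using v fin \<mu>(1) m_le by (intro add_left_mono member_le_sum) auto
  also have "\<dots> = (\<Sum>x\<in>V. \<mu> x * (p \<bullet> x))"
    using \<mu>(2) by (simp add: ring_distribs sum.distrib sum_subtractf sum_distrib_right[symmetric])
  also have "\<dots> = p \<bullet> (\<Sum>x\<in>V. \<mu> x *\<^sub>R x)"
    by (simp add: inner_sum_right)
  also have "\<dots> \<le> p \<bullet> y"
    using p_nonneg \<mu>(3) by (rule inner_mono_nonneg)
  finally show ?thesis .
qed

text \<open>A probability vector in the normal set at z is minimised over S_psi at z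
  (the infimum is attained because psi, hence S_psi, is nonnegative).\<close>
lemma normal_set_minimal:
  assumes psi_nonneg: "\<forall>u\<in>C. \<forall>i. 0 \<le> psi u $ i"
    and q: "q \<in> normal_set psi C z" and x: "x \<in> S_psi psi C"
  shows "q \<bullet> z \<le> q \<bullet> x"
proof -
  have q_nonneg: "\<forall>i. 0 \<le> q$i" using q unfolding normal_set_def prob_simplex_def by simp
  have "\<forall>a\<in>psi ` C. 0 \<le> q \<bullet> a"
    using psi_nonneg q_nonneg inner_mono_nonneg[of q 0] by auto
  then have "\<forall>y\<in>S_psi psi C. 0 \<le> q \<bullet> y"
    unfolding S_psi_def using lower_bound_convex_hull by blast
  then have "Inf ((\<lambda>z'. q \<bullet> z') ` S_psi psi C) \<le> q \<bullet> x"
    using x by (intro cInf_lower) (auto intro: bdd_belowI[of _ 0])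
  then show ?thesis using q unfolding normal_set_def by simp
qed

text \<open>The predictor
  maps u to the trigger label of a heavy dominator of psi u.\<close>
lemma calibrated_of_finite_normal_cover:
  fixes L :: "'k \<Rightarrow> real^'n::finite" and psi :: "'d \<Rightarrow> real^'n"
  assumes psi_nonneg: "\<forall>u\<in>C. \<forall>i. 0 \<le> psi u $ i"
    and fin: "finite V" and ne: "V \<noteq> {}" and V_in: "V \<subseteq> S_psi psi C"
    and cover: "\<forall>q\<in>prob_simplex. \<exists>v\<in>V. q \<in> normal_set psi C v"
    and refine: "\<forall>v\<in>V. \<exists>t. normal_set psi C v \<subseteq> trigger_set L t"
  shows "calibrated L psi C"
proof -
  obtain label where label: "\<forall>v\<in>V. normal_set psi C v \<subseteq> trigger_set L (label v)"
    using refine by metis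
  have "\<forall>u\<in>C. \<exists>v. heavy_dominator V (psi u) v"
  proof
    fix u assume "u \<in> C"
    then have "psi u \<in> S_psi psi C" unfolding S_psi_def by (simp add: hull_inc)
    then show "\<exists>v. heavy_dominator V (psi u) v"
      using cover normal_set_minimal[OF psi_nonneg] by (intro heavy_dominator_exists[OF fin ne]) metis
  qed
  then obtain sel where sel: "\<forall>u\<in>C. heavy_dominator V (psi u) (sel u)" by metis
  show ?thesis unfolding calibrated_def
  proof (intro exI[of _ "label \<circ> sel"] ballI)
    fix p :: "real^'n" assume p: "p \<in> prob_simplex"
    then obtain vp where vp: "vp \<in> V" "p \<in> normal_set psi C vp" using cover by blast
    define m where "m = p \<bullet> vp"
    have m_le: "\<forall>x\<in>V. m \<le> p \<bullet> x" using normal_set_minimal[OF psi_nonneg vp(2)] V_in m_def by auto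
    obtain \<delta> where \<delta>: "\<delta> > 0" "\<forall>x\<in>V. p \<bullet> x = m \<or> m + \<delta> \<le> p \<bullet> x"
      using uniform_gap[of "(\<lambda>x. p \<bullet> x) ` V" m] fin m_le by auto
    have wrong: "m + \<delta> / card V \<le> p \<bullet> psi u"
      if u: "u \<in> C" and bad: "(label \<circ> sel) u \<notin> argmin_loss L p" for u
    proof -
      have v: "sel u \<in> V" using sel u unfolding heavy_dominator_def by blast
      have "p \<bullet> sel u \<noteq> m"
      proof
        assume "p \<bullet> sel u = m"
        then have "p \<in> normal_set psi C (sel u)" using vp(2) unfolding m_def normal_set_def by simp
        then show False using label v bad unfolding trigger_set_def by auto
      qed
      then show ?thesis using heavy_dominator_gap[OF _ fin _ m_le] sel u \<delta> v p
        unfolding prob_simplex_def by force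
    qed
    have "(INF u\<in>C. ereal (p \<bullet> psi u)) \<le> ereal m"
      using INF_le_convex_hull V_in vp(1) unfolding m_def S_psi_def by blast
    also have "\<dots> < ereal (m + \<delta> / card V)" using \<delta>(1) fin ne by (simp add: card_gt_0_iff)
    also have "\<dots> \<le> (INF u\<in>{u\<in>C. (label \<circ> sel) u \<notin> argmin_loss L p}. ereal (p \<bullet> psi u))"
      using wrong by (intro INF_greatest) auto
    finally show "(INF u\<in>{u\<in>C. (label \<circ> sel) u \<notin> argmin_loss L p}. ereal (p \<bullet> psi u))
        > (INF u\<in>C. ereal (p \<bullet> psi u))" .
  qed
qed

theorem mainTheorem5:
  fixes L :: "'k::finite \<Rightarrow> real ^ 'n::finite"
    and psi :: "real ^ 'd::finite \<Rightarrow> real ^ 'n"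
    and C :: "(real ^ 'd) set"
    and r :: nat
    and z :: "nat \<Rightarrow> real ^ 'n"
  assumes L_nonneg: "\<forall>t i. 0 \<le> L t $ i"
    and C_convex: "convex C"
    and psi_nonneg: "\<forall>u\<in>C. \<forall>i. 0 \<le> psi u $ i"
    and r_pos: "r \<ge> 1"
    and z_in: "\<forall>j\<in>{1..r}. z j \<in> S_psi psi C"
    and cover: "(\<Union>j\<in>{1..r}. normal_set psi C (z j)) = prob_simplex"
    and refine: "\<forall>j\<in>{1..r}. \<exists>t. normal_set psi C (z j) \<subseteq> trigger_set L t"
  shows "calibrated L psi C"
proof (rule calibrated_of_finite_normal_cover[OF psi_nonneg, of "z ` {1..r}"])
  show "finite (z ` {1..r})" by simp
  show "z ` {1..r} \<noteq> {}" using r_pos by simp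
  show "z ` {1..r} \<subseteq> S_psi psi C" using z_in by blast
  show "\<forall>q\<in>prob_simplex. \<exists>v\<in>z ` {1..r}. q \<in> normal_set psi C v" using cover by blast
  show "\<forall>v\<in>z ` {1..r}. \<exists>t. normal_set psi C v \<subseteq> trigger_set L t" using refine by blast
qed

end
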